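(* Let $G=(V,E)$ be a finite connected simple graph on $N\ge2$ vertices with adjacency matrix $A$, whose largest eigenvalue is $\phi_0$; let $W\subseteq V$ be a nonempty set of marked vertices, and for $\gamma>0$ let $H(\gamma)=-\gamma A-\sum_{w\in W}|w\rangle\langle w|$ on $\mathbb{C}^V$. Fix an index $j\in\{2,\dots,N\}$, and for $\gamma>0$ let $\lambda^-(\gamma)$ be the smallest eigenvalue of $H(\gamma)$ and $\lambda^+(\gamma)$ its $j$-th smallest eigenvalue counted with multiplicity (so $\lambda^+(\gamma)>\lambda^-(\gamma)$). Then there exists $\gamma>0$ such that $$-\gamma\phi_0=\frac{\lambda^-(\gamma)+\lambda^+(\gamma)}{2}.$$
   Context: $\{|v\rangle: v\in V\}$ is the computational basis of $\mathbb{C}^V$. *)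

theory Defs
  imports "Jordan_Normal_Form.Char_Poly" "HOL-Computational_Algebra.Fundamental_Theorem_Algebra"
    "HOL-Library.Multiset"
begin

definition simple_graph :: "nat \<Rightarrow> (nat \<Rightarrow> nat \<Rightarrow> bool) \<Rightarrow> bool" where
  "simple_graph N E \<longleftrightarrow>
     (\<forall>u v. E u v \<longrightarrow> u < N \<and> v < N) \<and>
     (\<forall>u v. E u v \<longrightarrow> E v u) \<and> (\<forall>v. \<not> E v v)"

definition connected_graph :: "nat \<Rightarrow> (nat \<Rightarrow> nat \<Rightarrow> bool) \<Rightarrow> bool" where
  "connected_graph N E \<longleftrightarrow> (\<forall>u<N. \<forall>v<N. E\<^sup>*\<^sup>* u v)"

definition adjacency_matrix :: "nat \<Rightarrow> (nat \<Rightarrow> nat \<Rightarrow> bool) \<Rightarrow> complex mat" where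
  "adjacency_matrix N E = mat N N (\<lambda>(u, v). if E u v then 1 else 0)"

definition marked_projector :: "nat \<Rightarrow> nat set \<Rightarrow> complex mat" where
  "marked_projector N W = mat N N (\<lambda>(u, v). if u = v \<and> u \<in> W then 1 else 0)"

definition search_hamiltonian :: "nat \<Rightarrow> (nat \<Rightarrow> nat \<Rightarrow> bool) \<Rightarrow> nat set \<Rightarrow> real \<Rightarrow> complex mat" where
  "search_hamiltonian N E W \<gamma> =
     (- (complex_of_real \<gamma> \<cdot>\<^sub>m adjacency_matrix N E)) - marked_projector N W"

text \<open>Eigenvalues counted with multiplicity (roots of the characteristic polynomial),
  listed in increasing order of real part (they are real for Hermitian matrices).\<close>
definition eigenvalues_sorted :: "complex mat \<Rightarrow> real list" where
  "eigenvalues_sorted M = sorted_list_of_multiset (image_mset Re (proots (char_poly M)))"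

text \<open>k-th smallest eigenvalue, 1-indexed.\<close>
definition kth_eigenvalue :: "complex mat \<Rightarrow> nat \<Rightarrow> real" where
  "kth_eigenvalue M k = eigenvalues_sorted M ! (k - 1)"

definition largest_eigenvalue :: "complex mat \<Rightarrow> real" where
  "largest_eigenvalue M = last (eigenvalues_sorted M)"

end

(*
  Write lambda^-(gamma) and lambda^+(gamma) for the two eigenvalues of H(gamma) = -gamma A - P_W in
  question and let f(gamma) = lambda^-(gamma) + lambda^+(gamma) + 2 gamma phi_0; we need a positive
  zero of f, and obtain it from the intermediate value theorem.

  Since |<x|A x>| <= N |x|^2, Weyl's inequality makes every eigenvalue of H(gamma) N-Lipschitz in
  gamma, so f is continuous. For small gamma, f < 0: a marked basis vector w has <w|H w> = -1, so
  lambda^- <= -1, while lambda^+ <= gamma N and phi_0 <= N. For large gamma, f > 0: lambda^- >=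
  -gamma phi_0 - 1, and the Courant-Fischer principle on the orthogonal complement of a top
  eigenvector of A gives lambda^+ >= lambda_2(H) >= -gamma phi_1 - 1, where phi_1 is the second
  largest eigenvalue of A. That phi_1 < phi_0 is the Perron-Frobenius simplicity of the top eigenvalue
  of a connected graph: otherwise some top eigenvector vanishes at a vertex, its entrywise modulus is
  again a top eigenvector, and nonnegativity propagates the zero along the edges.

  The spectral theorem (an orthonormal eigenbasis whose eigenvalues are the roots of the
  characteristic polynomial) comes from the Schur decomposition: a Hermitian matrix whose eigenvalues
  all vanish is zero, so the compression of a Hermitian matrix to the orthogonal complement of some of
  its eigenvectors always has an eigenvector there.
*)

theory Submission
  imports Defs "Jordan_Normal_Form.Schur_Decomposition"
begin

section \<open>Inner product and Hermitian matrices\<close>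

text \<open>\<open>cinner x y\<close> is the bra-ket \<open>\<langle>x|y\<rangle>\<close>, antilinear in \<open>x\<close>;
  it equals the library's \<open>y \<bullet>c x\<close>.\<close>

definition cinner :: "complex vec \<Rightarrow> complex vec \<Rightarrow> complex" where
  "cinner x y = (\<Sum>i<dim_vec x. cnj (x $ i) * y $ i)"

definition cnorm2 :: "complex vec \<Rightarrow> real" where
  "cnorm2 x = (\<Sum>i<dim_vec x. (cmod (x $ i))\<^sup>2)"

definition hermitian :: "nat \<Rightarrow> complex mat \<Rightarrow> bool" where
  "hermitian n M \<longleftrightarrow> M \<in> carrier_mat n n \<and> (\<forall>i<n. \<forall>j<n. M $$ (j, i) = cnj (M $$ (i, j)))"

abbreviation qform :: "complex mat \<Rightarrow> complex vec \<Rightarrow> real" where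
  "qform M x \<equiv> Re (cinner x (M *\<^sub>v x))"

lemma hermitian_carrier: "hermitian n M \<Longrightarrow> M \<in> carrier_mat n n"
  unfolding hermitian_def by blast

lemma mult_mat_vec_index_sum:
  "M \<in> carrier_mat n n \<Longrightarrow> x \<in> carrier_vec n \<Longrightarrow> i < n \<Longrightarrow>
   (M *\<^sub>v x) $ i = (\<Sum>j<n. M $$ (i, j) * x $ j)"
  by (auto simp: mult_mat_vec_def scalar_prod_def lessThan_atLeast0 row_def)

lemma times_mat_index_sum:
  "A \<in> carrier_mat n n \<Longrightarrow> B \<in> carrier_mat n n \<Longrightarrow> i < n \<Longrightarrow> j < n \<Longrightarrow>
   (A * B) $$ (i, j) = (\<Sum>l<n. A $$ (i, l) * B $$ (l, j))"
  by (auto simp: scalar_prod_def lessThan_atLeast0)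

lemma cnj_mult_self: "cnj z * z = complex_of_real ((cmod z)\<^sup>2)"
  using complex_norm_square[of z] by (simp add: mult.commute)

lemma cnj_cinner: "dim_vec y = dim_vec x \<Longrightarrow> cnj (cinner x y) = cinner y x"
  by (simp add: cinner_def mult.commute)

lemma cinner_self: "cinner x x = of_real (cnorm2 x)"
  unfolding cinner_def cnorm2_def of_real_sum by (simp add: cnj_mult_self)

lemma cnorm2_nonneg: "0 \<le> cnorm2 x"
  unfolding cnorm2_def by (intro sum_nonneg) auto

lemma cnorm2_eq_0_iff:
  assumes "x \<in> carrier_vec n"
  shows "cnorm2 x = 0 \<longleftrightarrow> x = 0\<^sub>v n"
proof
  assume "cnorm2 x = 0"
  hence "\<forall>i\<in>{..<dim_vec x}. (cmod (x $ i))\<^sup>2 = 0"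
    unfolding cnorm2_def by (subst sum_nonneg_eq_0_iff[symmetric]) auto
  thus "x = 0\<^sub>v n" using assms by (intro eq_vecI) auto
qed (auto simp: cnorm2_def)

lemma cnorm2_pos: "x \<in> carrier_vec n \<Longrightarrow> x \<noteq> 0\<^sub>v n \<Longrightarrow> 0 < cnorm2 x"
  using cnorm2_eq_0_iff cnorm2_nonneg by (metis less_eq_real_def)

lemma cinner_smult_right: "dim_vec y = dim_vec x \<Longrightarrow> cinner x (c \<cdot>\<^sub>v y) = c * cinner x y"
  unfolding cinner_def by (simp add: sum_distrib_left mult.left_commute)

lemma cinner_smult_left: "cinner (c \<cdot>\<^sub>v x) y = cnj c * cinner x y"
  unfolding cinner_def by (simp add: sum_distrib_left mult.assoc)

lemma cinner_unit_vec_left: "i < n \<Longrightarrow> v \<in> carrier_vec n \<Longrightarrow> cinner (unit_vec n i) v = v $ i"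
  unfolding cinner_def by (simp add: unit_vec_def if_distrib[of "\<lambda>a. cnj a * _"] cong: if_cong)

lemma cinner_unit_vec_right: "i < n \<Longrightarrow> v \<in> carrier_vec n \<Longrightarrow> cinner v (unit_vec n i) = cnj (v $ i)"
  unfolding cinner_def by (simp add: unit_vec_def if_distrib[of "\<lambda>a. _ * a"] cong: if_cong)

lemma qform_unit_vec: "M \<in> carrier_mat n n \<Longrightarrow> i < n \<Longrightarrow> qform M (unit_vec n i) = Re (M $$ (i, i))"
  by (simp add: cinner_unit_vec_left)

lemma cnorm2_unit_vec: "i < n \<Longrightarrow> cnorm2 (unit_vec n i) = 1"
  using cinner_self[of "unit_vec n i"] cinner_unit_vec_left[of i n "unit_vec n i"] by simp

lemma hermitian_cinner:
  assumes "hermitian n M" and x: "x \<in> carrier_vec n" and y: "y \<in> carrier_vec n"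
  shows "cinner x (M *\<^sub>v y) = cinner (M *\<^sub>v x) y"
proof -
  have M: "M \<in> carrier_mat n n" and sym: "\<And>i j. i < n \<Longrightarrow> j < n \<Longrightarrow> cnj (M $$ (j, i)) = M $$ (i, j)"
    using assms(1) unfolding hermitian_def by (metis complex_cnj_cnj)+
  have "cinner x (M *\<^sub>v y) = (\<Sum>i<n. \<Sum>j<n. cnj (x $ i) * M $$ (i, j) * y $ j)"
    unfolding cinner_def using x y M
    by (simp add: mult_mat_vec_index_sum sum_distrib_left mult.assoc del: index_mult_mat_vec)
  also have "\<dots> = (\<Sum>j<n. \<Sum>i<n. cnj (x $ i) * M $$ (i, j) * y $ j)"
    by (rule sum.swap)
  also have "\<dots> = cinner (M *\<^sub>v x) y"
    unfolding cinner_def using x y M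
    by (auto simp: mult_mat_vec_index_sum sum_distrib_right sym simp del: index_mult_mat_vec
        intro!: sum.cong)
  finally show ?thesis .
qed

lemma hermitianI_cinner:
  assumes M: "M \<in> carrier_mat n n"
    and adj: "\<And>x y. x \<in> carrier_vec n \<Longrightarrow> y \<in> carrier_vec n \<Longrightarrow>
      cinner x (M *\<^sub>v y) = cinner (M *\<^sub>v x) y"
  shows "hermitian n M"
  unfolding hermitian_def
proof (intro conjI allI impI M)
  fix i j assume i: "i < n" and j: "j < n"
  have "M $$ (j, i) = cinner (unit_vec n j) (M *\<^sub>v unit_vec n i)"
    using M i j by (simp add: cinner_unit_vec_left)
  also have "\<dots> = cinner (M *\<^sub>v unit_vec n j) (unit_vec n i)"
    by (rule adj) auto
  also have "\<dots> = cnj (M $$ (i, j))"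
    using M i j by (simp add: cinner_unit_vec_right)
  finally show "M $$ (j, i) = cnj (M $$ (i, j))" .
qed

lemma hermitian_cinner_self_real:
  assumes "hermitian n M" and "x \<in> carrier_vec n"
  shows "cinner x (M *\<^sub>v x) = of_real (qform M x)"
proof -
  have "cnj (cinner x (M *\<^sub>v x)) = cinner (M *\<^sub>v x) x"
    using assms hermitian_carrier by (intro cnj_cinner) auto
  also have "\<dots> = cinner x (M *\<^sub>v x)"
    using hermitian_cinner[OF assms assms(2)] by simp
  finally show ?thesis by (auto simp: complex_eq_iff)
qed

lemma exists_nonzero_orthogonal:
  assumes fs: "set fs \<subseteq> carrier_vec n" and len: "length fs < n"
  shows "\<exists>x\<in>carrier_vec n. x \<noteq> 0\<^sub>v n \<and> (\<forall>f\<in>set fs. cinner f x = 0)"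
proof -
  define c where "c i = (if i < length fs then conjugate (fs ! i) else 0\<^sub>v n)" for i
  define F where "F = mat\<^sub>r n n (\<lambda>i. if i = n - 1 then 0\<^sub>v n else c i)"
  have F: "F \<in> carrier_mat n n" unfolding F_def by auto
  have "det F = 0" unfolding F_def
    by (rule det_row_0) (use len fs in \<open>auto simp: c_def nth_mem subsetD\<close>)
  then obtain x where x: "x \<in> carrier_vec n" "x \<noteq> 0\<^sub>v n" "F *\<^sub>v x = 0\<^sub>v n"
    using det_0_iff_vec_prod_zero_field[OF F] by auto
  have "cinner (fs ! i) x = 0" if i: "i < length fs" for i
  proof -
    have fi: "fs ! i \<in> carrier_vec n" using fs i by auto
    moreover have "F $$ (i, j) = cnj (fs ! i $ j)" if "j < n" for j
      using i len that fi unfolding F_def c_def by (auto simp: mat_of_rows_def)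
    moreover have "(F *\<^sub>v x) $ i = 0" using x i len by simp
    ultimately show ?thesis
      using mult_mat_vec_index_sum[OF F x(1), of i] i len unfolding cinner_def by simp
  qed
  thus ?thesis using x by (metis in_set_conv_nth)
qed

section \<open>The spectral theorem\<close>

lemma hermitian_square_kernel:
  assumes h: "hermitian n M" and y: "y \<in> carrier_vec n" and MMy: "M *\<^sub>v (M *\<^sub>v y) = 0\<^sub>v n"
  shows "M *\<^sub>v y = 0\<^sub>v n"
proof -
  have My: "M *\<^sub>v y \<in> carrier_vec n" using hermitian_carrier[OF h] y by simp
  have "of_real (cnorm2 (M *\<^sub>v y)) = cinner y (M *\<^sub>v (M *\<^sub>v y))"
    unfolding cinner_self[symmetric] using hermitian_cinner[OF h y My] by simp
  also have "\<dots> = 0" unfolding MMy cinner_def using y by simp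
  finally show ?thesis using cnorm2_eq_0_iff[OF My] by simp
qed

lemma col_mult_strictly_upper_triangular:
  assumes C: "C \<in> carrier_mat n n" and B: "B \<in> carrier_mat n n" and i: "i < n"
    and B0: "\<And>l. i \<le> l \<Longrightarrow> l < n \<Longrightarrow> B $$ (l, i) = 0"
    and C0: "\<And>l. l < i \<Longrightarrow> col C l = 0\<^sub>v n"
  shows "col (C * B) i = 0\<^sub>v n"
proof (rule eq_vecI)
  fix r assume "r < dim_vec (0\<^sub>v n :: 'a vec)"
  then have r: "r < n" by simp
  have "C $$ (r, l) * B $$ (l, i) = 0" if "l < n" for l
  proof (cases "l < i")
    case True
    then have "col C l $ r = 0" using C0 r by simp
    then show ?thesis using C r that by simp
  qed (use B0 that in auto)
  then show "col (C * B) i $ r = 0\<^sub>v n $ r"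
    using times_mat_index_sum[OF C B r i] C B r i by simp
qed (use C B in simp)

lemma hermitian_similar_strictly_upper_triangular_zero:
  assumes h: "hermitian n M" and sim: "similar_mat_wit M B P Q" and ut: "upper_triangular B"
    and diag0: "\<And>i. i < n \<Longrightarrow> B $$ (i, i) = 0"
  shows "M = 0\<^sub>m n n"
proof -
  have M: "M \<in> carrier_mat n n" using hermitian_carrier[OF h] .
  note wit = similar_mat_witD2[OF M sim]
  have B: "B \<in> carrier_mat n n" and P: "P \<in> carrier_mat n n" and Q: "Q \<in> carrier_mat n n"
    using wit by auto
  have MP: "M * P = P * B"
  proof -
    have "M * P = P * B * (Q * P)" using wit B P Q by (simp add: assoc_mult_mat[of _ n n _ n _ n])
    thus ?thesis using wit B P by simp
  qed
  define C where "C = M * P"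
  have C: "C \<in> carrier_mat n n" unfolding C_def using M P by auto
  have MC: "M * C = C * B"
  proof -
    have "M * C = M * (P * B)" unfolding C_def MP ..
    also have "\<dots> = M * P * B" using M P B by (simp add: assoc_mult_mat[of _ n n _ n _ n])
    finally show ?thesis unfolding C_def .
  qed
  have B0: "B $$ (l, i) = 0" if "i \<le> l" "l < n" for i l
    using ut B diag0 that unfolding upper_triangular_def by (cases "l = i") auto
  \<comment> \<open>column \<open>i\<close> of \<open>C\<close> lies in the range of \<open>M\<close> and,
    by \<open>M C = C B\<close>, in its kernel\<close>
  have "col C i = 0\<^sub>v n" if "i < n" for i
    using that
  proof (induction i rule: less_induct)
    case (less i)
    have MPi: "M *\<^sub>v col P i = col C i" using col_mult2[OF M P less.prems] unfolding C_def by simp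
    have "M *\<^sub>v (M *\<^sub>v col P i) = col (C * B) i"
      unfolding MPi using col_mult2[OF M C less.prems] MC by simp
    also have "\<dots> = 0\<^sub>v n"
      by (rule col_mult_strictly_upper_triangular[OF C B less.prems]) (use B0 less in auto)
    finally have "M *\<^sub>v col P i = 0\<^sub>v n"
      using hermitian_square_kernel[OF h, of "col P i"] P by (simp add: carrier_vecI)
    then show ?case unfolding MPi .
  qed
  then have C0: "C = 0\<^sub>m n n"
    using C by (intro eq_matI) (auto simp: vec_eq_iff)
  have "M = C * Q" unfolding C_def using wit M P Q by (simp add: assoc_mult_mat[of _ n n _ n _ n])
  then show ?thesis unfolding C0 using Q by simp
qed

lemma hermitian_eigenvalues_zero_imp_zero:
  assumes h: "hermitian n M" and ev: "\<And>e. eigenvalue M e \<Longrightarrow> e = 0"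
  shows "M = 0\<^sub>m n n"
proof -
  have M: "M \<in> carrier_mat n n" using hermitian_carrier[OF h] .
  obtain es where cp: "char_poly M = (\<Prod>e\<leftarrow>es. [:- e, 1:])" and len: "length es = n"
    using char_poly_factorized[OF M] by blast
  have es0: "e = 0" if "e \<in> set es" for e
  proof -
    have "poly (char_poly M) e = 0" unfolding cp poly_prod_list_zero_iff using that by auto
    thus ?thesis using eigenvalue_root_char_poly[OF M] ev by simp
  qed
  obtain B P Q where schur: "schur_decomposition M es = (B, P, Q)" by (metis prod_cases3)
  from schur_decomposition[OF M cp schur]
  have sim: "similar_mat_wit M B P Q" and ut: "upper_triangular B" and dg: "diag_mat B = es"
    by auto
  have B: "B \<in> carrier_mat n n" using similar_mat_witD2[OF M sim] by auto
  have "B $$ (i, i) = 0" if "i < n" for i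
  proof -
    have "B $$ (i, i) = es ! i" using dg[symmetric] B that by (simp add: diag_mat_def)
    thus ?thesis using es0 that len by simp
  qed
  thus ?thesis by (rule hermitian_similar_strictly_upper_triangular_zero[OF h sim ut])
qed

lemma hermitian_eigenvalue_real:
  assumes h: "hermitian n M" and x: "x \<in> carrier_vec n" "x \<noteq> 0\<^sub>v n" and Mx: "M *\<^sub>v x = e \<cdot>\<^sub>v x"
  shows "e = of_real (qform M x / cnorm2 x)"
proof -
  have "e * of_real (cnorm2 x) = cinner x (M *\<^sub>v x)"
    unfolding Mx using x by (simp add: cinner_smult_right cinner_self)
  also have "\<dots> = of_real (qform M x)" by (rule hermitian_cinner_self_real[OF h x(1)])
  finally show ?thesis using cnorm2_pos[OF x] by (simp add: field_simps)
qed

definition orthonormal :: "nat \<Rightarrow> complex vec list \<Rightarrow> bool" where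
  "orthonormal n vs \<longleftrightarrow> set vs \<subseteq> carrier_vec n \<and> distinct vs \<and>
     (\<forall>v\<in>set vs. \<forall>w\<in>set vs. cinner v w = (if v = w then 1 else 0))"

lemma orthonormal_nth:
  assumes "orthonormal n vs" "i < length vs" "j < length vs"
  shows "cinner (vs ! i) (vs ! j) = (if i = j then 1 else 0)"
  using assms nth_eq_iff_index_eq[of vs i j] unfolding orthonormal_def by auto

lemma orthonormal_snoc:
  assumes vs: "orthonormal n vs" and u: "u \<in> carrier_vec n" "cinner u u = 1"
    and orth: "\<forall>v\<in>set vs. cinner v u = 0"
  shows "orthonormal n (vs @ [u])"
proof -
  have "u \<notin> set vs" using orth u by force
  moreover have "cinner u v = 0" if "v \<in> set vs" for v
    using cnj_cinner[of v u] orth that vs u unfolding orthonormal_def by fastforce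
  ultimately show ?thesis using vs u orth unfolding orthonormal_def by auto
qed

definition orthonormal_eigenpairs ::
  "nat \<Rightarrow> complex mat \<Rightarrow> (complex vec \<times> real) list \<Rightarrow> bool" where
  "orthonormal_eigenpairs n M ps \<longleftrightarrow> orthonormal n (map fst ps) \<and>
     (\<forall>p\<in>set ps. M *\<^sub>v fst p = complex_of_real (snd p) \<cdot>\<^sub>v fst p)"

lemma orthonormal_eigenpairs_nth:
  assumes "orthonormal_eigenpairs n M ps" "i < length ps"
  shows "fst (ps ! i) \<in> carrier_vec n"
    and "M *\<^sub>v fst (ps ! i) = complex_of_real (snd (ps ! i)) \<cdot>\<^sub>v fst (ps ! i)"
    and "j < length ps \<Longrightarrow> cinner (fst (ps ! i)) (fst (ps ! j)) = (if i = j then 1 else 0)"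
  using assms orthonormal_nth[of n "map fst ps" i j] nth_mem[OF assms(2)]
  unfolding orthonormal_eigenpairs_def orthonormal_def by auto

definition orth_compl_projector :: "nat \<Rightarrow> complex vec list \<Rightarrow> complex mat" where
  "orth_compl_projector n vs =
     mat n n (\<lambda>(r, s). (if r = s then 1 else 0) - (\<Sum>i<length vs. vs ! i $ r * cnj (vs ! i $ s)))"

lemma orth_compl_projector_carrier: "orth_compl_projector n vs \<in> carrier_mat n n"
  unfolding orth_compl_projector_def by simp

lemma orth_compl_projector_mult_vec_index:
  assumes vs: "set vs \<subseteq> carrier_vec n" and x: "x \<in> carrier_vec n" and r: "r < n"
  shows "(orth_compl_projector n vs *\<^sub>v x) $ r = x $ r - (\<Sum>i<length vs. vs ! i $ r * cinner (vs ! i) x)"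
proof -
  let ?k = "length vs"
  have "(orth_compl_projector n vs *\<^sub>v x) $ r =
    (\<Sum>s<n. (if r = s then x $ s else 0) - (\<Sum>i<?k. vs ! i $ r * (cnj (vs ! i $ s) * x $ s)))"
    unfolding mult_mat_vec_index_sum[OF orth_compl_projector_carrier x r]
    unfolding orth_compl_projector_def using r
    by (intro sum.cong) (auto simp: sum_distrib_right left_diff_distrib mult.assoc)
  also have "\<dots> = x $ r - (\<Sum>i<?k. \<Sum>s<n. vs ! i $ r * (cnj (vs ! i $ s) * x $ s))"
    using r by (simp add: sum_subtractf sum.swap[of _ "{..<n}"])
  also have "\<dots> = x $ r - (\<Sum>i<?k. vs ! i $ r * cinner (vs ! i) x)"
    using vs unfolding cinner_def
    by (auto simp: sum_distrib_left intro!: sum.cong dest!: nth_mem[THEN subsetD[OF vs]])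
  finally show ?thesis .
qed

lemma cinner_orth_compl_projector:
  assumes vs: "orthonormal n vs" and x: "x \<in> carrier_vec n" and j: "j < length vs"
  shows "cinner (vs ! j) (orth_compl_projector n vs *\<^sub>v x) = 0"
proof -
  let ?k = "length vs"
  have carr: "set vs \<subseteq> carrier_vec n" using vs unfolding orthonormal_def by blast
  then have dj: "dim_vec (vs ! j) = n" using j by (metis carrier_vecD nth_mem subsetD)
  have "cinner (vs ! j) (orth_compl_projector n vs *\<^sub>v x) =
    cinner (vs ! j) x - (\<Sum>r<n. \<Sum>i<?k. cnj (vs ! j $ r) * vs ! i $ r * cinner (vs ! i) x)"
    unfolding cinner_def[of "vs ! j"] dj using orth_compl_projector_mult_vec_index[OF carr x]
    by (simp add: right_diff_distrib sum_subtractf sum_distrib_left mult.assoc)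
  also have "(\<Sum>r<n. \<Sum>i<?k. cnj (vs ! j $ r) * vs ! i $ r * cinner (vs ! i) x) =
    (\<Sum>i<?k. cinner (vs ! j) (vs ! i) * cinner (vs ! i) x)"
    unfolding cinner_def[of "vs ! j"] dj by (simp add: sum_distrib_right sum.swap[of _ "{..<n}"])
  also have "\<dots> = cinner (vs ! j) x"
    using orthonormal_nth[OF vs j] j by (simp add: if_distrib[of "\<lambda>a. a * _"] cong: if_cong)
  finally show ?thesis by simp
qed

lemma orth_compl_projector_id:
  assumes vs: "set vs \<subseteq> carrier_vec n" and x: "x \<in> carrier_vec n"
    and orth: "\<forall>v\<in>set vs. cinner v x = 0"
  shows "orth_compl_projector n vs *\<^sub>v x = x"
  using x orth_compl_projector_mult_vec_index[OF vs x] orth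
  by (intro eq_vecI) (auto simp: orth_compl_projector_def)

lemma hermitian_orth_compl_projector: "hermitian n (orth_compl_projector n vs)"
  unfolding hermitian_def orth_compl_projector_def by (auto simp: mult.commute)

lemma hermitian_eigenvector_in_invariant_range:
  assumes h: "hermitian n M" and hP: "hermitian n P"
    and range: "\<And>x. x \<in> carrier_vec n \<Longrightarrow> S (P *\<^sub>v x)"
    and fixed: "\<And>x. x \<in> carrier_vec n \<Longrightarrow> S x \<Longrightarrow> P *\<^sub>v x = x"
    and invariant: "\<And>x. x \<in> carrier_vec n \<Longrightarrow> S x \<Longrightarrow> S (M *\<^sub>v x)"
    and x0: "x0 \<in> carrier_vec n" "x0 \<noteq> 0\<^sub>v n" "S x0"
  shows "\<exists>u e. u \<in> carrier_vec n \<and> u \<noteq> 0\<^sub>v n \<and> M *\<^sub>v u = e \<cdot>\<^sub>v u \<and> S u"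
proof -
  have M: "M \<in> carrier_mat n n" and P: "P \<in> carrier_mat n n"
    using hermitian_carrier h hP by auto
  define M' where "M' = P * M * P"
  have M': "M' \<in> carrier_mat n n" unfolding M'_def using P M by auto
  have M'_vec: "M' *\<^sub>v x = P *\<^sub>v (M *\<^sub>v (P *\<^sub>v x))" if "x \<in> carrier_vec n" for x
    unfolding M'_def using P M that by (simp add: assoc_mult_mat_vec[of _ n n _ n])
  have M'_eq: "M' *\<^sub>v x = M *\<^sub>v x" if "x \<in> carrier_vec n" "S x" for x
    using M'_vec fixed invariant M that by simp
  have hM': "hermitian n M'"
  proof (rule hermitianI_cinner[OF M'])
    fix x y :: "complex vec" assume x: "x \<in> carrier_vec n" and y: "y \<in> carrier_vec n"
    show "cinner x (M' *\<^sub>v y) = cinner (M' *\<^sub>v x) y"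
      unfolding M'_vec[OF x] M'_vec[OF y] using x y P M
      by (simp add: hermitian_cinner[OF hP] hermitian_cinner[OF h])
  qed
  show ?thesis
  proof (cases "\<exists>e. eigenvalue M' e \<and> e \<noteq> 0")
    case True
    then obtain e w where e: "e \<noteq> 0" and w: "w \<in> carrier_vec n" "w \<noteq> 0\<^sub>v n"
      and M'w: "M' *\<^sub>v w = e \<cdot>\<^sub>v w"
      using M' unfolding eigenvalue_def eigenvector_def by blast
    \<comment> \<open>an eigenvector of \<open>M'\<close> for a nonzero eigenvalue lies in the range of \<open>P\<close>\<close>
    have "w = P *\<^sub>v ((1 / e) \<cdot>\<^sub>v (M *\<^sub>v (P *\<^sub>v w)))"
      using M'w[unfolded M'_vec[OF w(1)]] e w P M by (simp add: mult_mat_vec smult_smult_assoc)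
    then have "S w" using range M P w by (metis mult_mat_vec_carrier smult_carrier_vec)
    then show ?thesis using w M'w M'_eq by metis
  next
    case False
    then have "M' = 0\<^sub>m n n" using hermitian_eigenvalues_zero_imp_zero[OF hM'] by blast
    then have "M *\<^sub>v x0 = 0\<^sub>m n n *\<^sub>v x0" using M'_eq x0 by simp
    also have "\<dots> = 0 \<cdot>\<^sub>v x0" using x0 by (intro eq_vecI) auto
    finally show ?thesis using x0 by blast
  qed
qed

lemma eigenvector_orthogonal_to_eigenpairs:
  assumes h: "hermitian n M" and ps: "orthonormal_eigenpairs n M ps" and len: "length ps < n"
  shows "\<exists>u a. u \<in> carrier_vec n \<and> u \<noteq> 0\<^sub>v n \<and> M *\<^sub>v u = complex_of_real a \<cdot>\<^sub>v u \<and>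
           (\<forall>v\<in>fst ` set ps. cinner v u = 0)"
proof -
  define vs where "vs = map fst ps"
  define orth where "orth x \<longleftrightarrow> (\<forall>v\<in>set vs. cinner v x = 0)" for x
  have vs: "orthonormal n vs" using ps unfolding orthonormal_eigenpairs_def vs_def by blast
  then have carr: "set vs \<subseteq> carrier_vec n" unfolding orthonormal_def by blast
  have range: "orth (orth_compl_projector n vs *\<^sub>v x)" if "x \<in> carrier_vec n" for x
    unfolding orth_def using cinner_orth_compl_projector[OF vs that] by (metis in_set_conv_nth)
  have fixed: "orth_compl_projector n vs *\<^sub>v x = x" if "x \<in> carrier_vec n" "orth x" for x
    using orth_compl_projector_id[OF carr] that unfolding orth_def by blast
  have invariant: "orth (M *\<^sub>v x)" if x: "x \<in> carrier_vec n" and "orth x" for x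
    unfolding orth_def
  proof
    fix v assume "v \<in> set vs"
    then obtain i where i: "i < length ps" and v: "v = fst (ps ! i)"
      unfolding vs_def by (auto simp: in_set_conv_nth)
    note eig = orthonormal_eigenpairs_nth[OF ps i]
    have "cinner v (M *\<^sub>v x) = cinner (M *\<^sub>v v) x" unfolding v by (rule hermitian_cinner[OF h eig(1) x])
    also have "\<dots> = 0"
      using \<open>orth x\<close> \<open>v \<in> set vs\<close> unfolding v eig(2) cinner_smult_left orth_def by simp
    finally show "cinner v (M *\<^sub>v x) = 0" .
  qed
  obtain x0 where "x0 \<in> carrier_vec n" "x0 \<noteq> 0\<^sub>v n" "orth x0"
    using exists_nonzero_orthogonal[OF carr] len unfolding vs_def orth_def by auto
  then obtain u e where u: "u \<in> carrier_vec n" "u \<noteq> 0\<^sub>v n" "M *\<^sub>v u = e \<cdot>\<^sub>v u" "orth u"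
    using hermitian_eigenvector_in_invariant_range[OF h hermitian_orth_compl_projector range fixed invariant]
    by blast
  have "M *\<^sub>v u = complex_of_real (qform M u / cnorm2 u) \<cdot>\<^sub>v u"
    using u(3) hermitian_eigenvalue_real[OF h u(1-3)] by simp
  then show ?thesis using u(1,2,4) unfolding orth_def vs_def set_map by blast
qed

lemma cinner_self_normalize:
  assumes "x \<in> carrier_vec n" "x \<noteq> 0\<^sub>v n"
  defines "u \<equiv> complex_of_real (1 / sqrt (cnorm2 x)) \<cdot>\<^sub>v x"
  shows "cinner u u = 1"
proof -
  define c where "c = 1 / sqrt (cnorm2 x)"
  have "cinner u u = complex_of_real (c * c * cnorm2 x)"
    unfolding u_def c_def[symmetric] cinner_smult_left using assms
    by (simp add: cinner_smult_right cinner_self)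
  also have "c * c * cnorm2 x = 1"
    using cnorm2_pos[OF assms(1,2)] unfolding c_def
    by (simp add: real_sqrt_mult[symmetric] del: real_sqrt_mult)
  finally show ?thesis by simp
qed

lemma orthonormal_eigenpairs_exist:
  assumes h: "hermitian n M"
  shows "k \<le> n \<Longrightarrow> \<exists>ps. orthonormal_eigenpairs n M ps \<and> length ps = k"
proof (induction k)
  case 0
  show ?case by (simp add: orthonormal_eigenpairs_def orthonormal_def)
next
  case (Suc k)
  then obtain ps where ps: "orthonormal_eigenpairs n M ps" and len: "length ps = k" by auto
  obtain x a where x: "x \<in> carrier_vec n" "x \<noteq> 0\<^sub>v n"
    and Mx: "M *\<^sub>v x = complex_of_real a \<cdot>\<^sub>v x" and orth: "\<forall>v\<in>fst ` set ps. cinner v x = 0"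
    using eigenvector_orthogonal_to_eigenpairs[OF h ps] len Suc.prems by auto
  define u where "u = complex_of_real (1 / sqrt (cnorm2 x)) \<cdot>\<^sub>v x"
  have u: "u \<in> carrier_vec n" "cinner u u = 1"
    unfolding u_def using x cinner_self_normalize[OF x] by auto
  have Mu: "M *\<^sub>v u = complex_of_real a \<cdot>\<^sub>v u"
    unfolding u_def using hermitian_carrier[OF h] x Mx
    by (simp add: mult_mat_vec smult_smult_assoc mult.commute)
  have "cinner v u = 0" if v: "v \<in> fst ` set ps" for v
  proof -
    have "dim_vec v = n" using ps v unfolding orthonormal_eigenpairs_def orthonormal_def by auto
    then show ?thesis using orth v x unfolding u_def by (auto simp: cinner_smult_right)
  qed
  then have "orthonormal_eigenpairs n M (ps @ [(u, a)])"
    using ps orthonormal_snoc[OF _ u, of "map fst ps"] Mu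
    unfolding orthonormal_eigenpairs_def by auto
  then show ?case using len by (intro exI[of _ "ps @ [(u, a)]"]) simp
qed

lemma orthonormal_basis_unitary:
  assumes vs: "orthonormal n vs" and len: "length vs = n"
  defines "U \<equiv> mat n n (\<lambda>(r, i). vs ! i $ r)" and "U' \<equiv> mat n n (\<lambda>(i, r). cnj (vs ! i $ r))"
  shows "U' * U = 1\<^sub>m n" and "U * U' = 1\<^sub>m n"
proof -
  have U: "U \<in> carrier_mat n n" and U': "U' \<in> carrier_mat n n" unfolding U_def U'_def by auto
  show U'U: "U' * U = 1\<^sub>m n"
  proof (rule eq_matI)
    fix i j assume "i < dim_row (1\<^sub>m n :: complex mat)" "j < dim_col (1\<^sub>m n :: complex mat)"
    then have i: "i < n" and j: "j < n" by auto
    have "dim_vec (vs ! i) = n" using vs i len unfolding orthonormal_def by (metis carrier_vecD nth_mem subsetD)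
    then have "(U' * U) $$ (i, j) = cinner (vs ! i) (vs ! j)"
      unfolding times_mat_index_sum[OF U' U i j] unfolding U_def U'_def cinner_def using i j by simp
    then show "(U' * U) $$ (i, j) = 1\<^sub>m n $$ (i, j)" using orthonormal_nth[OF vs] i j len by simp
  qed (use U U' in auto)
  show "U * U' = 1\<^sub>m n" by (rule mat_mult_left_right_inverse[OF U' U U'U])
qed

lemma orthonormal_basis_complete:
  assumes "orthonormal n vs" "length vs = n" "r < n" "s < n"
  shows "(\<Sum>i<n. vs ! i $ r * cnj (vs ! i $ s)) = (if r = s then 1 else 0)"
proof -
  let ?U = "mat n n (\<lambda>(r, i). vs ! i $ r)" and ?U' = "mat n n (\<lambda>(i, r). cnj (vs ! i $ r))"
  have "(?U * ?U') $$ (r, s) = (\<Sum>i<n. vs ! i $ r * cnj (vs ! i $ s))"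
    using assms(3,4) by (subst times_mat_index_sum) auto
  then show ?thesis using orthonormal_basis_unitary(2)[OF assms(1,2)] assms(3,4) by simp
qed

lemma char_poly_orthonormal_eigenbasis:
  assumes ps: "orthonormal_eigenpairs n M ps" and len: "length ps = n" and M: "M \<in> carrier_mat n n"
  shows "char_poly M = (\<Prod>a\<leftarrow>map (complex_of_real \<circ> snd) ps. [:- a, 1:])"
proof -
  have vs: "orthonormal n (map fst ps)" using ps unfolding orthonormal_eigenpairs_def by blast
  define U where "U = mat n n (\<lambda>(r, i). map fst ps ! i $ r)"
  define U' where "U' = mat n n (\<lambda>(i, r). cnj (map fst ps ! i $ r))"
  define D where "D = mat n n (\<lambda>(i, j). if i = j then complex_of_real (snd (ps ! i)) else 0)"
  have U: "U \<in> carrier_mat n n" and U': "U' \<in> carrier_mat n n" and D: "D \<in> carrier_mat n n"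
    unfolding U_def U'_def D_def by auto
  have U'U: "U' * U = 1\<^sub>m n" and UU': "U * U' = 1\<^sub>m n"
    using orthonormal_basis_unitary[OF vs] len unfolding U_def U'_def by auto
  have MU: "M * U = U * D"
  proof (rule eq_matI)
    fix r l assume "r < dim_row (U * D)" "l < dim_col (U * D)"
    then have r: "r < n" and l: "l < n" using U D by auto
    have l': "l < length ps" using l len by simp
    note eig = orthonormal_eigenpairs_nth[OF ps l']
    have "(M * U) $$ (r, l) = (M *\<^sub>v fst (ps ! l)) $ r"
      unfolding times_mat_index_sum[OF M U r l] mult_mat_vec_index_sum[OF M eig(1) r]
      unfolding U_def using r l len by simp
    also have "\<dots> = (U * D) $$ (r, l)"
      unfolding times_mat_index_sum[OF U D r l] eig(2) unfolding U_def D_def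
      using r l len eig(1) by (simp add: if_distrib[of "\<lambda>a. _ * a"] mult.commute cong: if_cong)
    finally show "(M * U) $$ (r, l) = (U * D) $$ (r, l)" .
  qed (use M U D in auto)
  have "M = U * D * U'"
  proof -
    have "M = M * (U * U')" using UU' M by simp
    also have "\<dots> = M * U * U'" using M U U' by (simp add: assoc_mult_mat[of _ n n _ n _ n])
    finally show ?thesis unfolding MU .
  qed
  then have "similar_mat M D"
    unfolding similar_mat_def by (intro exI[of _ U] exI[of _ U'] similar_mat_witI[OF UU' U'U _ M D U U'])
  then have "char_poly M = char_poly D" by (rule char_poly_similar)
  also have "\<dots> = (\<Prod>a\<leftarrow>diag_mat D. [:- a, 1:])"
    by (rule char_poly_upper_triangular[OF D]) (auto simp: upper_triangular_def D_def)
  also have "diag_mat D = map (complex_of_real \<circ> snd) ps"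
    unfolding diag_mat_def D_def using len by (intro nth_equalityI) auto
  finally show ?thesis .
qed

lemma proots_linear_factors: "proots (\<Prod>a\<leftarrow>as. [:- a, 1:]) = mset (as :: complex list)"
proof (induction as)
  case (Cons a as)
  have "proots ([:- a, 1:] * (\<Prod>a\<leftarrow>as. [:- a, 1:])) = {#a#} + proots (\<Prod>a\<leftarrow>as. [:- a, 1:])"
    using proots_linear_factor[of "- a"] by (subst proots_mult) (auto simp: prod_list_zero_iff)
  then show ?case using Cons by (simp del: mult_pCons_left)
qed simp

definition sorted_eigenbasis :: "nat \<Rightarrow> complex mat \<Rightarrow> (complex vec \<times> real) list \<Rightarrow> bool" where
  "sorted_eigenbasis n M ps \<longleftrightarrow>
     orthonormal_eigenpairs n M ps \<and> length ps = n \<and> map snd ps = eigenvalues_sorted M"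

theorem hermitian_sorted_eigenbasis:
  assumes h: "hermitian n M"
  shows "\<exists>ps. sorted_eigenbasis n M ps"
proof -
  obtain ps0 where ps0: "orthonormal_eigenpairs n M ps0" and len0: "length ps0 = n"
    using orthonormal_eigenpairs_exist[OF h] by blast
  define ps where "ps = sort_key snd ps0"
  have "mset (map fst ps) = mset (map fst ps0)" unfolding ps_def by simp
  then have ps: "orthonormal_eigenpairs n M ps"
    using ps0 mset_eq_imp_distinct_iff[of "map fst ps" "map fst ps0"]
    unfolding orthonormal_eigenpairs_def orthonormal_def ps_def by simp
  have len: "length ps = n" using len0 unfolding ps_def by simp
  have "eigenvalues_sorted M = sorted_list_of_multiset (mset (map snd ps))"
    unfolding eigenvalues_sorted_def
      char_poly_orthonormal_eigenbasis[OF ps len hermitian_carrier[OF h]] proots_linear_factors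
    by (simp add: multiset.map_comp comp_def)
  also have "\<dots> = map snd ps"
    using sorted_sort_id[of "map snd ps"] unfolding sorted_list_of_multiset_mset ps_def by simp
  finally show ?thesis using ps len unfolding sorted_eigenbasis_def by auto
qed

lemma eigenvalues_sorted_mono:
  "i \<le> j \<Longrightarrow> j < length (eigenvalues_sorted M) \<Longrightarrow> eigenvalues_sorted M ! i \<le> eigenvalues_sorted M ! j"
  unfolding eigenvalues_sorted_def by (rule sorted_nth_mono) simp_all

lemma sorted_eigenbasis_eigenvalue:
  "sorted_eigenbasis n M ps \<Longrightarrow> i < n \<Longrightarrow> snd (ps ! i) = eigenvalues_sorted M ! i"
  unfolding sorted_eigenbasis_def by (metis nth_map)

lemma sorted_eigenbasis_mono:
  "sorted_eigenbasis n M ps \<Longrightarrow> i \<le> j \<Longrightarrow> j < n \<Longrightarrow> snd (ps ! i) \<le> snd (ps ! j)"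
  using eigenvalues_sorted_mono[of i j M] sorted_eigenbasis_eigenvalue[of n M ps]
  unfolding sorted_eigenbasis_def by (metis le_less_trans length_map)

lemma length_eigenvalues_sorted: "hermitian n M \<Longrightarrow> length (eigenvalues_sorted M) = n"
  using hermitian_sorted_eigenbasis unfolding sorted_eigenbasis_def by (metis length_map)

section \<open>Variational bounds on eigenvalues\<close>

lemma orthonormal_basis_expand:
  assumes vs: "orthonormal n vs" and len: "length vs = n" and x: "x \<in> carrier_vec n" and r: "r < n"
  shows "x $ r = (\<Sum>i<n. cinner (vs ! i) x * vs ! i $ r)"
proof -
  have dim: "dim_vec (vs ! i) = n" if "i < n" for i
    using vs len that unfolding orthonormal_def by (metis carrier_vecD nth_mem subsetD)
  have "x $ r = (\<Sum>s<n. (\<Sum>i<n. vs ! i $ r * cnj (vs ! i $ s)) * x $ s)"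
    using r by (simp add: orthonormal_basis_complete[OF vs len r] if_distrib[of "\<lambda>a. a * _"] cong: if_cong)
  also have "\<dots> = (\<Sum>s<n. \<Sum>i<n. vs ! i $ r * cnj (vs ! i $ s) * x $ s)"
    by (simp add: sum_distrib_right)
  also have "\<dots> = (\<Sum>i<n. \<Sum>s<n. vs ! i $ r * cnj (vs ! i $ s) * x $ s)"
    by (rule sum.swap)
  also have "\<dots> = (\<Sum>i<n. cinner (vs ! i) x * vs ! i $ r)"
    unfolding cinner_def using dim
    by (intro sum.cong refl) (simp add: sum_distrib_left sum_distrib_right mult_ac)
  finally show ?thesis .
qed

lemma orthonormal_basis_parseval:
  assumes vs: "orthonormal n vs" and len: "length vs = n"
    and x: "x \<in> carrier_vec n" and y: "y \<in> carrier_vec n"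
  shows "cinner x y = (\<Sum>i<n. cnj (cinner (vs ! i) x) * cinner (vs ! i) y)"
proof -
  have dim: "dim_vec (vs ! i) = n" if "i < n" for i
    using vs len that unfolding orthonormal_def by (metis carrier_vecD nth_mem subsetD)
  have "cinner x y = (\<Sum>r<n. \<Sum>i<n. cnj (x $ r) * (cinner (vs ! i) y * vs ! i $ r))"
    unfolding cinner_def[of x] using x orthonormal_basis_expand[OF vs len y]
    by (simp add: sum_distrib_left)
  also have "\<dots> = (\<Sum>i<n. cnj (cinner (vs ! i) x) * cinner (vs ! i) y)"
    unfolding cinner_def[of "vs ! _" x] using dim
    by (subst sum.swap) (simp add: sum_distrib_left mult_ac)
  finally show ?thesis .
qed

lemma orthonormal_basis_cnorm2:
  assumes "orthonormal n vs" "length vs = n" "x \<in> carrier_vec n"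
  shows "cnorm2 x = (\<Sum>i<n. (cmod (cinner (vs ! i) x))\<^sup>2)"
proof -
  have "complex_of_real (cnorm2 x) = complex_of_real (\<Sum>i<n. (cmod (cinner (vs ! i) x))\<^sup>2)"
    unfolding cinner_self[symmetric] orthonormal_basis_parseval[OF assms assms(3)]
    by (simp add: cnj_mult_self)
  then show ?thesis by (simp only: of_real_eq_iff)
qed

lemma sorted_eigenbasis_cnorm2:
  "sorted_eigenbasis n M ps \<Longrightarrow> x \<in> carrier_vec n \<Longrightarrow>
   cnorm2 x = (\<Sum>i<n. (cmod (cinner (fst (ps ! i)) x))\<^sup>2)"
  using orthonormal_basis_cnorm2[of n "map fst ps" x]
  unfolding sorted_eigenbasis_def orthonormal_eigenpairs_def by simp

lemma sorted_eigenbasis_qform: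
  assumes h: "hermitian n M" and "sorted_eigenbasis n M ps" and x: "x \<in> carrier_vec n"
  shows "qform M x = (\<Sum>i<n. snd (ps ! i) * (cmod (cinner (fst (ps ! i)) x))\<^sup>2)"
proof -
  have ps: "orthonormal_eigenpairs n M ps" and len: "length ps = n"
    and vs: "orthonormal n (map fst ps)"
    using assms(2) unfolding sorted_eigenbasis_def orthonormal_eigenpairs_def by auto
  have "cinner (fst (ps ! i)) (M *\<^sub>v x) = complex_of_real (snd (ps ! i)) * cinner (fst (ps ! i)) x"
    if i: "i < n" for i
  proof -
    note eig = orthonormal_eigenpairs_nth[OF ps, of i]
    have "cinner (fst (ps ! i)) (M *\<^sub>v x) = cinner (M *\<^sub>v fst (ps ! i)) x"
      using hermitian_cinner[OF h _ x] eig(1) i len by simp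
    then show ?thesis using eig(2) i len by (simp add: cinner_smult_left)
  qed
  then have "cinner x (M *\<^sub>v x) = (\<Sum>i<n. complex_of_real (snd (ps ! i) * (cmod (cinner (fst (ps ! i)) x))\<^sup>2))"
    using orthonormal_basis_parseval[OF vs _ x, of "M *\<^sub>v x"] hermitian_carrier[OF h] x len
    by (simp add: cnj_mult_self mult.left_commute)
  then show ?thesis by (simp only: of_real_sum[symmetric] Re_complex_of_real)
qed

lemma rayleigh_upper:
  assumes h: "hermitian n M" and ps: "sorted_eigenbasis n M ps" and x: "x \<in> carrier_vec n"
    and k: "k < n" and orth: "\<And>i. k < i \<Longrightarrow> i < n \<Longrightarrow> cinner (fst (ps ! i)) x = 0"
  shows "qform M x \<le> eigenvalues_sorted M ! k * cnorm2 x"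
proof -
  have "qform M x = (\<Sum>i<n. snd (ps ! i) * (cmod (cinner (fst (ps ! i)) x))\<^sup>2)"
    by (rule sorted_eigenbasis_qform[OF h ps x])
  also have "\<dots> \<le> (\<Sum>i<n. snd (ps ! k) * (cmod (cinner (fst (ps ! i)) x))\<^sup>2)"
  proof (intro sum_mono)
    fix i assume i: "i \<in> {..<n}"
    show "snd (ps ! i) * (cmod (cinner (fst (ps ! i)) x))\<^sup>2 \<le> snd (ps ! k) * (cmod (cinner (fst (ps ! i)) x))\<^sup>2"
    proof (cases "k < i")
      case False
      then show ?thesis using sorted_eigenbasis_mono[OF ps, of i k] k by (intro mult_right_mono) auto
    qed (use orth i in simp)
  qed
  also have "\<dots> = eigenvalues_sorted M ! k * cnorm2 x"
    using sorted_eigenbasis_eigenvalue[OF ps k] sorted_eigenbasis_cnorm2[OF ps x]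
    by (simp add: sum_distrib_left)
  finally show ?thesis .
qed

lemma rayleigh_lower:
  assumes h: "hermitian n M" and ps: "sorted_eigenbasis n M ps" and x: "x \<in> carrier_vec n"
    and k: "k < n" and orth: "\<And>i. i < k \<Longrightarrow> cinner (fst (ps ! i)) x = 0"
  shows "eigenvalues_sorted M ! k * cnorm2 x \<le> qform M x"
proof -
  have "eigenvalues_sorted M ! k * cnorm2 x = (\<Sum>i<n. snd (ps ! k) * (cmod (cinner (fst (ps ! i)) x))\<^sup>2)"
    using sorted_eigenbasis_eigenvalue[OF ps k] sorted_eigenbasis_cnorm2[OF ps x]
    by (simp add: sum_distrib_left)
  also have "\<dots> \<le> (\<Sum>i<n. snd (ps ! i) * (cmod (cinner (fst (ps ! i)) x))\<^sup>2)"
  proof (intro sum_mono)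
    fix i assume i: "i \<in> {..<n}"
    show "snd (ps ! k) * (cmod (cinner (fst (ps ! i)) x))\<^sup>2 \<le> snd (ps ! i) * (cmod (cinner (fst (ps ! i)) x))\<^sup>2"
    proof (cases "i < k")
      case False
      then show ?thesis using sorted_eigenbasis_mono[OF ps, of k i] i by (intro mult_right_mono) auto
    qed (use orth in simp)
  qed
  also have "\<dots> = qform M x"
    by (rule sorted_eigenbasis_qform[OF h ps x, symmetric])
  finally show ?thesis .
qed

lemma sorted_eigenbasis_nth:
  assumes "sorted_eigenbasis n M ps" "k < n"
  shows "fst (ps ! k) \<in> carrier_vec n" and "cnorm2 (fst (ps ! k)) = 1"
    and "qform M (fst (ps ! k)) = eigenvalues_sorted M ! k"
proof -
  have ps: "orthonormal_eigenpairs n M ps" and k: "k < length ps"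
    using assms unfolding sorted_eigenbasis_def by auto
  note eig = orthonormal_eigenpairs_nth[OF ps k]
  show "fst (ps ! k) \<in> carrier_vec n" by (rule eig(1))
  have uu: "cinner (fst (ps ! k)) (fst (ps ! k)) = 1" using eig(3)[OF k] by simp
  then show "cnorm2 (fst (ps ! k)) = 1" unfolding cinner_self by simp
  show "qform M (fst (ps ! k)) = eigenvalues_sorted M ! k"
    using uu eig(1) sorted_eigenbasis_eigenvalue[OF assms]
    unfolding eig(2) by (simp add: cinner_smult_right)
qed

lemma eigenvalue_le_of_qform_le:
  assumes h: "hermitian n M" and k: "k < n"
    and le: "\<And>x. x \<in> carrier_vec n \<Longrightarrow> qform M x \<le> c * cnorm2 x"
  shows "eigenvalues_sorted M ! k \<le> c"
proof -
  obtain ps where ps: "sorted_eigenbasis n M ps" using hermitian_sorted_eigenbasis[OF h] ..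
  show ?thesis using le[OF sorted_eigenbasis_nth(1)[OF ps k]] sorted_eigenbasis_nth[OF ps k] by simp
qed

lemma exists_orthogonal_qform_le_eigenvalue:
  assumes h: "hermitian n M" and fs: "set fs \<subseteq> carrier_vec n" and len: "length fs \<le> k" and k: "k < n"
  shows "\<exists>x\<in>carrier_vec n. x \<noteq> 0\<^sub>v n \<and> (\<forall>f\<in>set fs. cinner f x = 0) \<and>
           qform M x \<le> eigenvalues_sorted M ! k * cnorm2 x"
proof -
  obtain ps where ps: "sorted_eigenbasis n M ps" using hermitian_sorted_eigenbasis[OF h] ..
  then have len_ps: "length ps = n" and eig: "orthonormal_eigenpairs n M ps"
    unfolding sorted_eigenbasis_def by auto
  define gs where "gs = fs @ map fst (drop (Suc k) ps)"
  have "set gs \<subseteq> carrier_vec n"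
    using fs eig unfolding gs_def orthonormal_eigenpairs_def orthonormal_def
    by (auto dest: in_set_dropD)
  moreover have "length gs < n" unfolding gs_def using len k len_ps by simp
  ultimately obtain x where x: "x \<in> carrier_vec n" "x \<noteq> 0\<^sub>v n" and orth: "\<forall>g\<in>set gs. cinner g x = 0"
    using exists_nonzero_orthogonal by blast
  have "cinner (fst (ps ! i)) x = 0" if "k < i" "i < n" for i
  proof -
    have "drop (Suc k) ps ! (i - Suc k) = ps ! i" and "i - Suc k < length (drop (Suc k) ps)"
      using that len_ps by simp_all
    then have "ps ! i \<in> set (drop (Suc k) ps)" by (metis nth_mem)
    then show ?thesis using orth unfolding gs_def by auto
  qed
  then have "qform M x \<le> eigenvalues_sorted M ! k * cnorm2 x" by (rule rayleigh_upper[OF h ps x(1) k])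
  then show ?thesis using x orth unfolding gs_def by auto
qed

lemma eigenvalue_ge_of_qform_ge_on_orthogonal:
  assumes h: "hermitian n M" and fs: "set fs \<subseteq> carrier_vec n" and len: "length fs < n"
    and ge: "\<And>x. x \<in> carrier_vec n \<Longrightarrow> (\<forall>f\<in>set fs. cinner f x = 0) \<Longrightarrow>
      c * cnorm2 x \<le> qform M x"
  shows "c \<le> eigenvalues_sorted M ! length fs"
proof -
  obtain x where x: "x \<in> carrier_vec n" "x \<noteq> 0\<^sub>v n" and orth: "\<forall>f\<in>set fs. cinner f x = 0"
    and le: "qform M x \<le> eigenvalues_sorted M ! length fs * cnorm2 x"
    using exists_orthogonal_qform_le_eigenvalue[OF h fs le_refl len] by blast
  have "c * cnorm2 x \<le> eigenvalues_sorted M ! length fs * cnorm2 x"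
    using ge[OF x(1) orth] le by linarith
  then show ?thesis using cnorm2_pos[OF x(1,2)] by simp
qed

lemma eigenvalue_le_of_qform_le_qform:
  assumes h1: "hermitian n M1" and h2: "hermitian n M2" and k: "k < n"
    and le: "\<And>x. x \<in> carrier_vec n \<Longrightarrow> qform M1 x \<le> qform M2 x + c * cnorm2 x"
  shows "eigenvalues_sorted M1 ! k \<le> eigenvalues_sorted M2 ! k + c"
proof -
  obtain ps where ps: "sorted_eigenbasis n M1 ps" using hermitian_sorted_eigenbasis[OF h1] ..
  then have len_ps: "length ps = n" and eig: "orthonormal_eigenpairs n M1 ps"
    unfolding sorted_eigenbasis_def by auto
  define fs where "fs = map fst (take k ps)"
  have "set fs \<subseteq> carrier_vec n"
    using eig unfolding fs_def orthonormal_eigenpairs_def orthonormal_def by (auto dest: in_set_takeD)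
  moreover have "length fs \<le> k" unfolding fs_def by simp
  ultimately obtain x where x: "x \<in> carrier_vec n" "x \<noteq> 0\<^sub>v n" and orth: "\<forall>f\<in>set fs. cinner f x = 0"
    and upper: "qform M2 x \<le> eigenvalues_sorted M2 ! k * cnorm2 x"
    using exists_orthogonal_qform_le_eigenvalue[OF h2 _ _ k] by blast
  have "cinner (fst (ps ! i)) x = 0" if "i < k" for i
  proof -
    have "take k ps ! i = ps ! i" and "i < length (take k ps)" using that k len_ps by simp_all
    then have "ps ! i \<in> set (take k ps)" by (metis nth_mem)
    then show ?thesis using orth unfolding fs_def by auto
  qed
  then have "eigenvalues_sorted M1 ! k * cnorm2 x \<le> qform M1 x"
    by (rule rayleigh_lower[OF h1 ps x(1) k])
  then have "eigenvalues_sorted M1 ! k * cnorm2 x \<le> (eigenvalues_sorted M2 ! k + c) * cnorm2 x"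
    using le[OF x(1)] upper by (simp add: algebra_simps)
  then show ?thesis using cnorm2_pos[OF x(1,2)] by simp
qed

lemma smallest_eigenvalue_le_qform:
  assumes h: "hermitian n M" and n: "0 < n" and x: "x \<in> carrier_vec n"
  shows "eigenvalues_sorted M ! 0 * cnorm2 x \<le> qform M x"
proof -
  obtain ps where ps: "sorted_eigenbasis n M ps" using hermitian_sorted_eigenbasis[OF h] ..
  show ?thesis by (rule rayleigh_lower[OF h ps x n]) simp
qed

lemma qform_le_largest_eigenvalue:
  assumes h: "hermitian n M" and n: "0 < n" and x: "x \<in> carrier_vec n"
  shows "qform M x \<le> eigenvalues_sorted M ! (n - 1) * cnorm2 x"
proof -
  obtain ps where ps: "sorted_eigenbasis n M ps" using hermitian_sorted_eigenbasis[OF h] ..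
  show ?thesis by (rule rayleigh_upper[OF h ps x]) (use n in auto)
qed

lemma qform_le_second_largest_eigenvalue:
  assumes h: "hermitian n M" and n: "1 < n"
  obtains v where "v \<in> carrier_vec n"
    and "\<And>x. x \<in> carrier_vec n \<Longrightarrow> cinner v x = 0 \<Longrightarrow>
      qform M x \<le> eigenvalues_sorted M ! (n - 2) * cnorm2 x"
proof -
  obtain ps where ps: "sorted_eigenbasis n M ps" using hermitian_sorted_eigenbasis[OF h] ..
  have "qform M x \<le> eigenvalues_sorted M ! (n - 2) * cnorm2 x"
    if "x \<in> carrier_vec n" "cinner (fst (ps ! (n - 1))) x = 0" for x
  proof (rule rayleigh_upper[OF h ps that(1)])
    fix i assume "n - 2 < i" "i < n"
    then have "i = n - 1" by simp
    then show "cinner (fst (ps ! i)) x = 0" using that(2) by simp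
  qed (use n in simp)
  moreover have "fst (ps ! (n - 1)) \<in> carrier_vec n" using sorted_eigenbasis_nth(1)[OF ps] n by simp
  ultimately show ?thesis using that by blast
qed

lemma qform_eq_largest_imp_eigenvector:
  assumes h: "hermitian n M" and n: "0 < n"
    and x: "x \<in> carrier_vec n" and eq: "qform M x = eigenvalues_sorted M ! (n - 1) * cnorm2 x"
  shows "M *\<^sub>v x = complex_of_real (eigenvalues_sorted M ! (n - 1)) \<cdot>\<^sub>v x"
proof -
  have M: "M \<in> carrier_mat n n" using hermitian_carrier[OF h] .
  obtain ps where ps: "sorted_eigenbasis n M ps" using hermitian_sorted_eigenbasis[OF h] ..
  have eig: "orthonormal_eigenpairs n M ps" and len: "length ps = n"
    and vs: "orthonormal n (map fst ps)"
    using ps unfolding sorted_eigenbasis_def orthonormal_eigenpairs_def by auto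
  define m where "m = eigenvalues_sorted M ! (n - 1)"
  define c where "c i = cinner (fst (ps ! i)) x" for i
  have le: "snd (ps ! i) \<le> m" if "i < n" for i
    using sorted_eigenbasis_mono[OF ps, of i "n - 1"] sorted_eigenbasis_eigenvalue[OF ps, of "n - 1"]
      that n unfolding m_def by simp
  have "(\<Sum>i<n. (m - snd (ps ! i)) * (cmod (c i))\<^sup>2) = m * cnorm2 x - qform M x"
    unfolding sorted_eigenbasis_qform[OF h ps x] sorted_eigenbasis_cnorm2[OF ps x] c_def
    by (simp add: sum_distrib_left left_diff_distrib sum_subtractf)
  also have "\<dots> = 0" using eq unfolding m_def by simp
  finally have "(m - snd (ps ! i)) * (cmod (c i))\<^sup>2 = 0" if "i < n" for i
    using that le by (subst (asm) sum_nonneg_eq_0_iff) auto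
  \<comment> \<open>so only eigenvectors for the eigenvalue \<open>m\<close> contribute to \<open>x\<close>\<close>
  then have cm: "complex_of_real (snd (ps ! i)) * c i = complex_of_real m * c i" if "i < n" for i
    using that by auto
  have Mx: "cinner (fst (ps ! i)) (M *\<^sub>v x) = complex_of_real m * c i" if i: "i < n" for i
  proof -
    note e = orthonormal_eigenpairs_nth[OF eig, of i]
    have "cinner (fst (ps ! i)) (M *\<^sub>v x) = cinner (M *\<^sub>v fst (ps ! i)) x"
      using hermitian_cinner[OF h _ x] e(1) i len by simp
    then show ?thesis using e(2) i len cm[OF i] unfolding c_def by (simp add: cinner_smult_left)
  qed
  show ?thesis
    unfolding m_def[symmetric]
  proof (rule eq_vecI)
    fix r assume "r < dim_vec (complex_of_real m \<cdot>\<^sub>v x)"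
    then have r: "r < n" using x by simp
    have "(M *\<^sub>v x) $ r = (\<Sum>i<n. cinner (fst (ps ! i)) (M *\<^sub>v x) * fst (ps ! i) $ r)"
      using orthonormal_basis_expand[OF vs _ _ r, of "M *\<^sub>v x"] M x len by simp
    also have "\<dots> = complex_of_real m * (\<Sum>i<n. c i * fst (ps ! i) $ r)"
      using Mx by (simp add: sum_distrib_left mult.assoc)
    also have "\<dots> = complex_of_real m * x $ r"
      using orthonormal_basis_expand[OF vs _ x r] len unfolding c_def by simp
    finally show "(M *\<^sub>v x) $ r = (complex_of_real m \<cdot>\<^sub>v x) $ r"
      using r x by simp
  qed (use M x in simp)
qed

lemma abs_qform_le_of_entries_bounded:
  assumes M: "M \<in> carrier_mat n n" and bound: "\<And>r s. r < n \<Longrightarrow> s < n \<Longrightarrow> cmod (M $$ (r, s)) \<le> 1"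
    and x: "x \<in> carrier_vec n"
  shows "\<bar>qform M x\<bar> \<le> real n * cnorm2 x"
proof -
  have "\<bar>qform M x\<bar> \<le> cmod (\<Sum>r<n. \<Sum>s<n. cnj (x $ r) * M $$ (r, s) * x $ s)"
    using abs_Re_le_cmod[of "cinner x (M *\<^sub>v x)"] x M unfolding cinner_def
    by (simp add: mult_mat_vec_index_sum sum_distrib_left mult.assoc del: index_mult_mat_vec)
  also have "\<dots> \<le> (\<Sum>r<n. \<Sum>s<n. cmod (cnj (x $ r) * M $$ (r, s) * x $ s))"
    by (rule order_trans[OF norm_sum sum_mono[OF norm_sum]])
  also have "\<dots> = (\<Sum>r<n. \<Sum>s<n. cmod (x $ r) * cmod (M $$ (r, s)) * cmod (x $ s))"
    by (simp add: norm_mult)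
  also have "\<dots> \<le> (\<Sum>r<n. \<Sum>s<n. ((cmod (x $ r))\<^sup>2 + (cmod (x $ s))\<^sup>2) / 2)"
  proof (intro sum_mono)
    fix r s assume "r \<in> {..<n}" "s \<in> {..<n}"
    then have "cmod (x $ r) * cmod (M $$ (r, s)) * cmod (x $ s) \<le> cmod (x $ r) * 1 * cmod (x $ s)"
      using bound by (intro mult_right_mono mult_left_mono) auto
    also have "\<dots> \<le> ((cmod (x $ r))\<^sup>2 + (cmod (x $ s))\<^sup>2) / 2"
      using sum_squares_bound[of "cmod (x $ r)" "cmod (x $ s)"] by (simp add: power2_eq_square)
    finally show "cmod (x $ r) * cmod (M $$ (r, s)) * cmod (x $ s) \<le> ((cmod (x $ r))\<^sup>2 + (cmod (x $ s))\<^sup>2) / 2" .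
  qed
  also have "\<dots> = real n * cnorm2 x"
    unfolding cnorm2_def using x
    by (simp add: sum.distrib add_divide_distrib sum_divide_distrib[symmetric] sum_distrib_left)
  finally show ?thesis .
qed

section \<open>Adjacency matrix and search Hamiltonian\<close>

lemma adjacency_matrix_carrier: "adjacency_matrix N E \<in> carrier_mat N N"
  unfolding adjacency_matrix_def by simp

lemma adjacency_matrix_index:
  "i < N \<Longrightarrow> j < N \<Longrightarrow> adjacency_matrix N E $$ (i, j) = (if E i j then 1 else 0)"
  unfolding adjacency_matrix_def by simp

lemma marked_projector_carrier: "marked_projector N W \<in> carrier_mat N N"
  unfolding marked_projector_def by simp

lemma marked_projector_index:
  "i < N \<Longrightarrow> j < N \<Longrightarrow> marked_projector N W $$ (i, j) = (if i = j \<and> i \<in> W then 1 else 0)"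
  unfolding marked_projector_def by simp

lemma search_hamiltonian_carrier: "search_hamiltonian N E W \<gamma> \<in> carrier_mat N N"
  unfolding search_hamiltonian_def using adjacency_matrix_carrier[of N E] marked_projector_carrier[of N W] by auto

lemma search_hamiltonian_index:
  "i < N \<Longrightarrow> j < N \<Longrightarrow> search_hamiltonian N E W \<gamma> $$ (i, j) =
     - (complex_of_real \<gamma> * adjacency_matrix N E $$ (i, j)) - marked_projector N W $$ (i, j)"
  unfolding search_hamiltonian_def using adjacency_matrix_carrier[of N E] marked_projector_carrier[of N W] by auto

lemma hermitian_adjacency_matrix:
  "simple_graph N E \<Longrightarrow> hermitian N (adjacency_matrix N E)"
  unfolding hermitian_def simple_graph_def by (auto simp: adjacency_matrix_carrier adjacency_matrix_index)

lemma hermitian_search_hamiltonian: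
  "simple_graph N E \<Longrightarrow> hermitian N (search_hamiltonian N E W \<gamma>)"
  unfolding hermitian_def simple_graph_def
  by (auto simp: search_hamiltonian_carrier search_hamiltonian_index adjacency_matrix_index
      marked_projector_index)

lemma qform_search_hamiltonian:
  assumes x: "x \<in> carrier_vec N"
  shows "qform (search_hamiltonian N E W \<gamma>) x =
    - \<gamma> * qform (adjacency_matrix N E) x - qform (marked_projector N W) x"
proof -
  let ?A = "adjacency_matrix N E" and ?P = "marked_projector N W"
  have "(search_hamiltonian N E W \<gamma> *\<^sub>v x) $ r =
    - (complex_of_real \<gamma> * (?A *\<^sub>v x) $ r) - (?P *\<^sub>v x) $ r" if r: "r < N" for r
    unfolding mult_mat_vec_index_sum[OF search_hamiltonian_carrier x r]
      mult_mat_vec_index_sum[OF adjacency_matrix_carrier x r] mult_mat_vec_index_sum[OF marked_projector_carrier x r]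
    using r by (simp add: search_hamiltonian_index left_diff_distrib sum_subtractf sum_negf
        sum_distrib_left mult.assoc)
  then have "cinner x (search_hamiltonian N E W \<gamma> *\<^sub>v x) =
    - (complex_of_real \<gamma> * cinner x (?A *\<^sub>v x)) - cinner x (?P *\<^sub>v x)"
    unfolding cinner_def using x
    by (simp add: right_diff_distrib sum_subtractf sum_negf sum_distrib_left mult.left_commute
        del: index_mult_mat_vec)
  then show ?thesis by simp
qed

lemma qform_marked_projector:
  assumes x: "x \<in> carrier_vec N"
  shows "qform (marked_projector N W) x = (\<Sum>r<N. if r \<in> W then (cmod (x $ r))\<^sup>2 else 0)"
proof -
  have "(marked_projector N W *\<^sub>v x) $ r = (if r \<in> W then x $ r else 0)" if r: "r < N" for r
    unfolding mult_mat_vec_index_sum[OF marked_projector_carrier x r] using r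
    by (simp add: marked_projector_index if_distrib[of "\<lambda>a. a * _"] cong: if_cong)
  then have "cinner x (marked_projector N W *\<^sub>v x) =
    (\<Sum>r<N. complex_of_real (if r \<in> W then (cmod (x $ r))\<^sup>2 else 0))"
    unfolding cinner_def using x by (intro sum.cong) (auto simp: cnj_mult_self simp del: index_mult_mat_vec)
  then show ?thesis by (simp only: of_real_sum[symmetric] Re_complex_of_real)
qed

lemma qform_marked_projector_bounds:
  assumes "x \<in> carrier_vec N"
  shows "0 \<le> qform (marked_projector N W) x" and "qform (marked_projector N W) x \<le> cnorm2 x"
  unfolding qform_marked_projector[OF assms] using assms unfolding cnorm2_def
  by (auto intro!: sum_nonneg sum_mono)

lemma abs_qform_adjacency_le:
  "x \<in> carrier_vec N \<Longrightarrow> \<bar>qform (adjacency_matrix N E) x\<bar> \<le> real N * cnorm2 x"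
  by (rule abs_qform_le_of_entries_bounded[OF adjacency_matrix_carrier]) (auto simp: adjacency_matrix_index)

lemma qform_search_hamiltonian_marked:
  assumes "simple_graph N E" and "w < N" and "w \<in> W"
  shows "qform (search_hamiltonian N E W \<gamma>) (unit_vec N w) = -1"
  using assms unfolding qform_unit_vec[OF search_hamiltonian_carrier \<open>w < N\<close>] simple_graph_def
  by (simp add: search_hamiltonian_index adjacency_matrix_index marked_projector_index)

section \<open>Simplicity of the largest adjacency eigenvalue\<close>

lemma eigenvector_vanishing_at:
  assumes M: "M \<in> carrier_mat n n" and u: "u \<in> carrier_vec n" and w: "w \<in> carrier_vec n"
    and uu: "cinner u u = 1" and uw: "cinner u w = 0" and w0: "w \<noteq> 0\<^sub>v n"
    and Mu: "M *\<^sub>v u = a \<cdot>\<^sub>v u" and Mw: "M *\<^sub>v w = a \<cdot>\<^sub>v w" and r: "r < n"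
  shows "\<exists>v\<in>carrier_vec n. v \<noteq> 0\<^sub>v n \<and> M *\<^sub>v v = a \<cdot>\<^sub>v v \<and> v $ r = 0"
proof (cases "w $ r = 0")
  case False
  define v where "v = (w $ r) \<cdot>\<^sub>v u - (u $ r) \<cdot>\<^sub>v w"
  have v: "v \<in> carrier_vec n" unfolding v_def using u w by simp
  have "cinner u v = w $ r * cinner u u - u $ r * cinner u w"
    unfolding cinner_def v_def using u w
    by (simp add: right_diff_distrib sum_subtractf sum_distrib_left mult.left_commute)
  then have "v \<noteq> 0\<^sub>v n" using False uu uw u unfolding cinner_def by auto
  moreover have "M *\<^sub>v v = a \<cdot>\<^sub>v v"
  proof -
    have "M *\<^sub>v v = (w $ r) \<cdot>\<^sub>v (M *\<^sub>v u) - (u $ r) \<cdot>\<^sub>v (M *\<^sub>v w)"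
      unfolding v_def using M u w by (simp add: mult_minus_distrib_mat_vec mult_mat_vec)
    then show ?thesis unfolding Mu Mw v_def using u w by (intro eq_vecI) (auto simp: algebra_simps)
  qed
  moreover have "v $ r = 0" unfolding v_def using u w r by simp
  ultimately show ?thesis using v by blast
qed (use w w0 Mw in blast)

lemma connected_graph_zero_propagation:
  assumes "connected_graph N E" and "\<And>r s. E r s \<Longrightarrow> f r = 0 \<Longrightarrow> f s = 0"
    and "r0 < N" "f r0 = 0" "t < N"
  shows "f t = 0"
proof -
  have "E\<^sup>*\<^sup>* r0 t" using assms unfolding connected_graph_def by blast
  then show ?thesis by (induction rule: rtranclp_induct) (use assms in auto)
qed

lemma adjacency_abs_top_eigenvector:
  assumes sg: "simple_graph N E" and N: "0 < N"
    and v: "v \<in> carrier_vec N" and Av: "adjacency_matrix N E *\<^sub>v v = complex_of_real \<phi> \<cdot>\<^sub>v v"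
    and \<phi>: "\<phi> = eigenvalues_sorted (adjacency_matrix N E) ! (N - 1)"
  defines "y \<equiv> vec N (\<lambda>r. complex_of_real (cmod (v $ r)))"
  shows "adjacency_matrix N E *\<^sub>v y = complex_of_real \<phi> \<cdot>\<^sub>v y"
proof -
  let ?A = "adjacency_matrix N E"
  have hA: "hermitian N ?A" by (rule hermitian_adjacency_matrix[OF sg])
  have y: "y \<in> carrier_vec N" unfolding y_def by simp
  have ny: "cnorm2 y = cnorm2 v" unfolding cnorm2_def y_def using v by simp
  have qv: "cinner v (?A *\<^sub>v v) = (\<Sum>r<N. \<Sum>s<N. cnj (v $ r) * ?A $$ (r, s) * v $ s)"
    unfolding cinner_def using v adjacency_matrix_carrier[of N E]
    by (simp add: mult_mat_vec_index_sum sum_distrib_left mult.assoc del: index_mult_mat_vec)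
  have qy: "qform ?A y = (\<Sum>r<N. \<Sum>s<N. cmod (cnj (v $ r) * ?A $$ (r, s) * v $ s))"
  proof -
    have "cinner y (?A *\<^sub>v y) =
      (\<Sum>r<N. \<Sum>s<N. complex_of_real (cmod (cnj (v $ r) * ?A $$ (r, s) * v $ s)))"
      unfolding cinner_def using y adjacency_matrix_carrier[of N E]
      by (auto simp: mult_mat_vec_index_sum adjacency_matrix_index sum_distrib_left y_def norm_mult
          simp del: index_mult_mat_vec intro!: sum.cong)
    then show ?thesis by (simp only: of_real_sum[symmetric] Re_complex_of_real)
  qed
  \<comment> \<open>the triangle inequality, using that the entries of \<open>A\<close> are nonnegative\<close>
  have "\<phi> * cnorm2 y = qform ?A v"
    unfolding ny Av using v by (simp add: cinner_smult_right cinner_self)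
  also have "\<dots> \<le> qform ?A y"
    unfolding qv qy by (rule order_trans[OF complex_Re_le_cmod order_trans[OF norm_sum sum_mono[OF norm_sum]]])
  finally have "\<phi> * cnorm2 y \<le> qform ?A y" .
  moreover have "qform ?A y \<le> \<phi> * cnorm2 y"
    unfolding \<phi> by (rule qform_le_largest_eigenvalue[OF hA N y])
  ultimately show ?thesis
    unfolding \<phi> by (intro qform_eq_largest_imp_eigenvector[OF hA N y]) (simp add: \<phi>)
qed

lemma adjacency_nonneg_eigenvector_zero_neighbour:
  assumes sg: "simple_graph N E" and g: "\<And>t. 0 \<le> g t"
    and Ay: "adjacency_matrix N E *\<^sub>v vec N (\<lambda>t. complex_of_real (g t)) =
      complex_of_real \<phi> \<cdot>\<^sub>v vec N (\<lambda>t. complex_of_real (g t))"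
    and e: "E r s" and gr: "g r = 0"
  shows "g s = 0"
proof -
  let ?y = "vec N (\<lambda>t. complex_of_real (g t))"
  have rs: "r < N" "s < N" using sg e unfolding simple_graph_def by auto
  \<comment> \<open>row \<open>r\<close> of \<open>A y = \<phi> y\<close> is a sum of nonnegative terms
    equal to \<open>\<phi> y\<^sub>r = 0\<close>\<close>
  have "complex_of_real (\<Sum>t<N. (if E r t then 1 else 0) * g t) = (adjacency_matrix N E *\<^sub>v ?y) $ r"
    using mult_mat_vec_index_sum[OF adjacency_matrix_carrier _ rs(1), of ?y] rs
    by (simp add: adjacency_matrix_index of_real_sum if_distrib[of "\<lambda>a. a * _"]
        if_distrib[of complex_of_real] cong: if_cong)
  also have "\<dots> = 0" unfolding Ay using rs gr by simp
  finally have "(\<Sum>t<N. (if E r t then 1 else 0) * g t) = 0"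
    by (simp only: of_real_eq_0_iff)
  then have "\<forall>t\<in>{..<N}. (if E r t then 1 else 0) * g t = 0"
    using g by (subst (asm) sum_nonneg_eq_0_iff) auto
  then show ?thesis using e rs(2) by (metis lessThan_iff mult_cancel_right1)
qed

theorem adjacency_largest_eigenvalue_simple:
  assumes sg: "simple_graph N E" and cn: "connected_graph N E" and N: "2 \<le> N"
  shows "eigenvalues_sorted (adjacency_matrix N E) ! (N - 2) < eigenvalues_sorted (adjacency_matrix N E) ! (N - 1)"
proof (rule ccontr)
  let ?A = "adjacency_matrix N E"
  define \<phi> where "\<phi> = eigenvalues_sorted ?A ! (N - 1)"
  assume not_less: "\<not> ?thesis"
  have hA: "hermitian N ?A" by (rule hermitian_adjacency_matrix[OF sg])
  obtain ps where ps: "sorted_eigenbasis N ?A ps" using hermitian_sorted_eigenbasis[OF hA] ..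
  then have eig: "orthonormal_eigenpairs N ?A ps" and len: "length ps = N"
    unfolding sorted_eigenbasis_def by auto
  have "eigenvalues_sorted ?A ! (N - 2) = \<phi>"
    using not_less sorted_eigenbasis_mono[OF ps, of "N - 2" "N - 1"] N
      sorted_eigenbasis_eigenvalue[OF ps] unfolding \<phi>_def by fastforce
  then have eq: "snd (ps ! (N - 2)) = \<phi>" "snd (ps ! (N - 1)) = \<phi>"
    using sorted_eigenbasis_eigenvalue[OF ps] N unfolding \<phi>_def by auto
  have i: "N - 2 < length ps" "N - 1 < length ps" using len N by auto
  note u = orthonormal_eigenpairs_nth[OF eig i(1)] and w = orthonormal_eigenpairs_nth[OF eig i(2)]
  have uu: "cinner (fst (ps ! (N - 2))) (fst (ps ! (N - 2))) = 1" using u(3)[OF i(1)] by simp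
  have uw: "cinner (fst (ps ! (N - 2))) (fst (ps ! (N - 1))) = 0" using u(3)[OF i(2)] N by simp
  have w0: "fst (ps ! (N - 1)) \<noteq> 0\<^sub>v N" using w(3)[OF i(2)] unfolding cinner_def by auto
  obtain v where v: "v \<in> carrier_vec N" "v \<noteq> 0\<^sub>v N"
    and Av: "?A *\<^sub>v v = complex_of_real \<phi> \<cdot>\<^sub>v v" and v0: "v $ 0 = 0"
    using eigenvector_vanishing_at[OF adjacency_matrix_carrier u(1) w(1) uu uw w0
        u(2)[unfolded eq] w(2)[unfolded eq], where r = 0] N by auto
  have Ay: "?A *\<^sub>v vec N (\<lambda>r. complex_of_real (cmod (v $ r))) =
    complex_of_real \<phi> \<cdot>\<^sub>v vec N (\<lambda>r. complex_of_real (cmod (v $ r)))"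
    using adjacency_abs_top_eigenvector[OF sg _ v(1) Av \<phi>_def] N by simp
  have "cmod (v $ s) = 0" if "E r s" "cmod (v $ r) = 0" for r s
    by (rule adjacency_nonneg_eigenvector_zero_neighbour[OF sg _ Ay that]) simp
  then have "cmod (v $ t) = 0" if "t < N" for t
    using connected_graph_zero_propagation[OF cn, of "\<lambda>r. cmod (v $ r)" 0] that N v0 by auto
  then show False using v by (auto simp: vec_eq_iff)
qed

section \<open>Eigenvalue bounds for the search Hamiltonian\<close>

lemma search_eigenvalue_lipschitz:
  assumes sg: "simple_graph N E" and k: "k < N"
  shows "\<bar>eigenvalues_sorted (search_hamiltonian N E W a) ! k -
          eigenvalues_sorted (search_hamiltonian N E W b) ! k\<bar> \<le> real N * \<bar>a - b\<bar>"
proof -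
  have le: "eigenvalues_sorted (search_hamiltonian N E W a) ! k \<le>
    eigenvalues_sorted (search_hamiltonian N E W b) ! k + real N * \<bar>a - b\<bar>" for a b
  proof (rule eigenvalue_le_of_qform_le_qform[OF hermitian_search_hamiltonian[OF sg]
        hermitian_search_hamiltonian[OF sg] k])
    fix x :: "complex vec" assume x: "x \<in> carrier_vec N"
    let ?q = "qform (adjacency_matrix N E) x"
    have "(b - a) * ?q \<le> \<bar>a - b\<bar> * \<bar>?q\<bar>" by (metis abs_ge_self abs_minus_commute abs_mult)
    also have "\<dots> \<le> \<bar>a - b\<bar> * (real N * cnorm2 x)"
      by (intro mult_left_mono abs_qform_adjacency_le[OF x]) simp
    finally show "qform (search_hamiltonian N E W a) x \<le>
      qform (search_hamiltonian N E W b) x + real N * \<bar>a - b\<bar> * cnorm2 x"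
      unfolding qform_search_hamiltonian[OF x] by (simp add: algebra_simps)
  qed
  show ?thesis using le[of a b] le[of b a] by (simp add: abs_le_iff abs_minus_commute)
qed

lemma search_ground_energy_le:
  assumes sg: "simple_graph N E" and W: "W \<subseteq> {0..<N}" "W \<noteq> {}"
  shows "eigenvalues_sorted (search_hamiltonian N E W \<gamma>) ! 0 \<le> -1"
proof -
  obtain w where w: "w \<in> W" using W(2) by blast
  then have wN: "w < N" using W(1) by auto
  show ?thesis
    using smallest_eigenvalue_le_qform[OF hermitian_search_hamiltonian[OF sg, of W \<gamma>] _ unit_vec_carrier[of N w]]
      qform_search_hamiltonian_marked[OF sg wN w] cnorm2_unit_vec[OF wN] wN by simp
qed

lemma search_eigenvalue_le:
  assumes sg: "simple_graph N E" and \<gamma>: "0 \<le> \<gamma>" and k: "k < N"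
  shows "eigenvalues_sorted (search_hamiltonian N E W \<gamma>) ! k \<le> \<gamma> * real N"
proof (rule eigenvalue_le_of_qform_le[OF hermitian_search_hamiltonian[OF sg] k])
  fix x :: "complex vec" assume x: "x \<in> carrier_vec N"
  let ?q = "qform (adjacency_matrix N E) x"
  have "- \<gamma> * ?q \<le> \<gamma> * \<bar>?q\<bar>" using mult_left_mono[OF abs_ge_minus_self \<gamma>] by simp
  also have "\<dots> \<le> \<gamma> * (real N * cnorm2 x)" using mult_left_mono[OF abs_qform_adjacency_le[OF x] \<gamma>] .
  finally have "- \<gamma> * ?q \<le> \<gamma> * (real N * cnorm2 x)" .
  then show "qform (search_hamiltonian N E W \<gamma>) x \<le> \<gamma> * real N * cnorm2 x"
    using qform_marked_projector_bounds(1)[OF x, of W] unfolding qform_search_hamiltonian[OF x] by simp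
qed

lemma search_ground_energy_ge:
  assumes sg: "simple_graph N E" and \<gamma>: "0 \<le> \<gamma>" and N: "0 < N"
  shows "- \<gamma> * eigenvalues_sorted (adjacency_matrix N E) ! (N - 1) - 1 \<le>
    eigenvalues_sorted (search_hamiltonian N E W \<gamma>) ! 0"
proof -
  have "(- \<gamma> * eigenvalues_sorted (adjacency_matrix N E) ! (N - 1) - 1) * cnorm2 x \<le>
    qform (search_hamiltonian N E W \<gamma>) x" if x: "x \<in> carrier_vec N" for x
    using mult_left_mono[OF qform_le_largest_eigenvalue[OF hermitian_adjacency_matrix[OF sg] N x] \<gamma>]
      qform_marked_projector_bounds(2)[OF x, of W]
    unfolding qform_search_hamiltonian[OF x] by (simp add: algebra_simps)
  then show ?thesis
    using eigenvalue_ge_of_qform_ge_on_orthogonal[OF hermitian_search_hamiltonian[OF sg], of "[]"] N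
    by simp
qed

lemma search_second_eigenvalue_ge:
  assumes sg: "simple_graph N E" and \<gamma>: "0 \<le> \<gamma>" and N: "2 \<le> N"
  shows "- \<gamma> * eigenvalues_sorted (adjacency_matrix N E) ! (N - 2) - 1 \<le>
    eigenvalues_sorted (search_hamiltonian N E W \<gamma>) ! 1"
proof -
  obtain v where v: "v \<in> carrier_vec N" and le: "\<And>x. x \<in> carrier_vec N \<Longrightarrow> cinner v x = 0 \<Longrightarrow>
      qform (adjacency_matrix N E) x \<le> eigenvalues_sorted (adjacency_matrix N E) ! (N - 2) * cnorm2 x"
    using qform_le_second_largest_eigenvalue[OF hermitian_adjacency_matrix[OF sg]] N by auto
  have "(- \<gamma> * eigenvalues_sorted (adjacency_matrix N E) ! (N - 2) - 1) * cnorm2 x \<le>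
    qform (search_hamiltonian N E W \<gamma>) x" if x: "x \<in> carrier_vec N" "cinner v x = 0" for x
    using mult_left_mono[OF le[OF x] \<gamma>] qform_marked_projector_bounds(2)[OF x(1), of W]
    unfolding qform_search_hamiltonian[OF x(1)] by (simp add: algebra_simps)
  then show ?thesis
    using eigenvalue_ge_of_qform_ge_on_orthogonal[OF hermitian_search_hamiltonian[OF sg], of "[v]"] v N
    by simp
qed

lemma largest_adjacency_eigenvalue_le:
  assumes sg: "simple_graph N E" and N: "0 < N"
  shows "eigenvalues_sorted (adjacency_matrix N E) ! (N - 1) \<le> real N"
  by (rule eigenvalue_le_of_qform_le[OF hermitian_adjacency_matrix[OF sg]])
    (use N abs_qform_adjacency_le in \<open>auto simp: abs_le_iff\<close>)

lemma continuous_on_if_lipschitz: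
  fixes f :: "real \<Rightarrow> real"
  assumes lip: "\<And>a b. \<bar>f a - f b\<bar> \<le> L * \<bar>a - b\<bar>"
  shows "continuous_on S f"
proof -
  have "isCont f x" for x
    unfolding continuous_at LIM_eq
  proof (intro allI impI)
    fix r :: real assume r: "0 < r"
    define d where "d = r / (\<bar>L\<bar> + 1)"
    have d: "0 < d" unfolding d_def using r by (simp add: add_pos_nonneg)
    have "\<bar>f y - f x\<bar> < r" if "\<bar>y - x\<bar> < d" for y
    proof -
      have "\<bar>f y - f x\<bar> \<le> \<bar>L\<bar> * \<bar>y - x\<bar>"
        using lip[of y x] mult_right_mono[OF abs_ge_self abs_ge_zero, of L "y - x"] by linarith
      also have "\<dots> \<le> \<bar>L\<bar> * d" using that by (simp add: mult_left_mono)
      also have "\<dots> < r" unfolding d_def using r by (simp add: field_simps)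
      finally show ?thesis .
    qed
    then show "\<exists>d>0. \<forall>y. y \<noteq> x \<and> norm (y - x) < d \<longrightarrow> norm (f y - f x) < r" using d by auto
  qed
  then show ?thesis by (simp add: continuous_at_imp_continuous_on)
qed

lemma search_eigenvalue_continuous:
  "simple_graph N E \<Longrightarrow> k < N \<Longrightarrow>
   continuous_on S (\<lambda>\<gamma>. eigenvalues_sorted (search_hamiltonian N E W \<gamma>) ! k)"
  by (rule continuous_on_if_lipschitz) (rule search_eigenvalue_lipschitz)

lemma search_energy_sum_upper:
  assumes sg: "simple_graph N E" and W: "W \<subseteq> {0..<N}" "W \<noteq> {}"
    and \<gamma>: "0 \<le> \<gamma>" and k: "k < N"
  shows "eigenvalues_sorted (search_hamiltonian N E W \<gamma>) ! 0
      + eigenvalues_sorted (search_hamiltonian N E W \<gamma>) ! k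
      + 2 * \<gamma> * eigenvalues_sorted (adjacency_matrix N E) ! (N - 1)
    \<le> 3 * \<gamma> * real N - 1"
  using search_ground_energy_le[OF sg W, of \<gamma>] search_eigenvalue_le[OF sg \<gamma> k, of W]
    mult_left_mono[OF largest_adjacency_eigenvalue_le[OF sg], of "2 * \<gamma>"] \<gamma> k
  by (simp add: mult.assoc)

lemma search_energy_sum_lower:
  assumes sg: "simple_graph N E" and \<gamma>: "0 \<le> \<gamma>" and N: "2 \<le> N" and k: "1 \<le> k" "k < N"
  shows "\<gamma> * (eigenvalues_sorted (adjacency_matrix N E) ! (N - 1)
        - eigenvalues_sorted (adjacency_matrix N E) ! (N - 2)) - 2
    \<le> eigenvalues_sorted (search_hamiltonian N E W \<gamma>) ! 0
      + eigenvalues_sorted (search_hamiltonian N E W \<gamma>) ! k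
      + 2 * \<gamma> * eigenvalues_sorted (adjacency_matrix N E) ! (N - 1)"
proof -
  have "eigenvalues_sorted (search_hamiltonian N E W \<gamma>) ! 1
    \<le> eigenvalues_sorted (search_hamiltonian N E W \<gamma>) ! k"
    using eigenvalues_sorted_mono length_eigenvalues_sorted[OF hermitian_search_hamiltonian[OF sg]] k
    by simp
  then show ?thesis
    using search_ground_energy_ge[OF sg \<gamma>, of W] search_second_eigenvalue_ge[OF sg \<gamma> N, of W] N
    by (simp add: algebra_simps)
qed

lemma largest_eigenvalue_conv_nth:
  "hermitian n M \<Longrightarrow> 0 < n \<Longrightarrow> largest_eigenvalue M = eigenvalues_sorted M ! (n - 1)"
  using length_eigenvalues_sorted[of n M] unfolding largest_eigenvalue_def by (subst last_conv_nth) auto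

theorem proposition4:
  fixes N :: nat and E :: "nat \<Rightarrow> nat \<Rightarrow> bool" and W :: "nat set" and j :: nat
  assumes "N \<ge> 2"
    and "simple_graph N E"
    and "connected_graph N E"
    and "W \<subseteq> {0..<N}" and "W \<noteq> {}"
    and "2 \<le> j" and "j \<le> N"
  shows "\<exists>\<gamma>>0. - \<gamma> * largest_eigenvalue (adjacency_matrix N E) =
           (kth_eigenvalue (search_hamiltonian N E W \<gamma>) 1
            + kth_eigenvalue (search_hamiltonian N E W \<gamma>) j) / 2"
proof -
  note N = \<open>N \<ge> 2\<close> and sg = \<open>simple_graph N E\<close>
    and W = \<open>W \<subseteq> {0..<N}\<close> \<open>W \<noteq> {}\<close>
  have j: "1 \<le> j - 1" "j - 1 < N" using \<open>2 \<le> j\<close> \<open>j \<le> N\<close> by auto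
  define \<phi> where "\<phi> = eigenvalues_sorted (adjacency_matrix N E) ! (N - 1)"
  define \<phi>' where "\<phi>' = eigenvalues_sorted (adjacency_matrix N E) ! (N - 2)"
  define f where "f \<gamma> = eigenvalues_sorted (search_hamiltonian N E W \<gamma>) ! 0
    + eigenvalues_sorted (search_hamiltonian N E W \<gamma>) ! (j - 1) + 2 * \<gamma> * \<phi>" for \<gamma>
  define \<gamma>\<^sub>0 where "\<gamma>\<^sub>0 = 1 / (4 * real N)"
  define \<gamma>\<^sub>1 where "\<gamma>\<^sub>1 = \<gamma>\<^sub>0 + 3 / (\<phi> - \<phi>')"
  have gap: "\<phi>' < \<phi>"
    unfolding \<phi>_def \<phi>'_def by (rule adjacency_largest_eigenvalue_simple[OF sg \<open>connected_graph N E\<close> N])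
  have \<gamma>\<^sub>0: "0 < \<gamma>\<^sub>0" "\<gamma>\<^sub>0 \<le> \<gamma>\<^sub>1" "3 * \<gamma>\<^sub>0 * real N < 1"
    using N gap unfolding \<gamma>\<^sub>0_def \<gamma>\<^sub>1_def by auto
  have "f \<gamma>\<^sub>0 \<le> 0"
    using search_energy_sum_upper[OF sg W less_imp_le[OF \<gamma>\<^sub>0(1)] j(2)] \<gamma>\<^sub>0
    unfolding f_def \<phi>_def by simp
  moreover have "0 \<le> f \<gamma>\<^sub>1"
  proof -
    have "\<gamma>\<^sub>1 * (\<phi> - \<phi>') = \<gamma>\<^sub>0 * (\<phi> - \<phi>') + 3"
      using gap unfolding \<gamma>\<^sub>1_def by (simp add: field_simps)
    moreover have "0 \<le> \<gamma>\<^sub>0 * (\<phi> - \<phi>')" using gap \<gamma>\<^sub>0 by simp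
    ultimately show ?thesis
      using search_energy_sum_lower[OF sg _ N j, of \<gamma>\<^sub>1 W] \<gamma>\<^sub>0
      unfolding f_def \<phi>_def \<phi>'_def by simp
  qed
  moreover have "continuous_on {\<gamma>\<^sub>0..\<gamma>\<^sub>1} f"
    unfolding f_def using N j(2) by (intro continuous_intros search_eigenvalue_continuous[OF sg]) auto
  ultimately obtain \<gamma> where "\<gamma>\<^sub>0 \<le> \<gamma>" "f \<gamma> = 0"
    using IVT'[of f \<gamma>\<^sub>0 0 \<gamma>\<^sub>1] \<gamma>\<^sub>0 by auto
  then show ?thesis
    using \<gamma>\<^sub>0 largest_eigenvalue_conv_nth[OF hermitian_adjacency_matrix[OF sg]] N
    unfolding kth_eigenvalue_def f_def \<phi>_def by (intro exI[of _ \<gamma>]) (simp add: algebra_simps)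
qed

end
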